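(* Let $S$ be a Polish space, $R\subseteq S\times S$ a Borel relation, and $\mu,\nu$ Borel probability measures on $S$. Set $c=1-\mathbf 1_R$. Then the supremum \[ \sup\Big\{\int_S\phi\,d\mu-\int_S\phi\,d\nu:\ \phi\in b\mathcal B(S),\ \phi(x)-\phi(y)\le c(x,y)\ \forall x,y\in S\Big\} \] is attained by some $\phi\in b\mathcal B(S)$ satisfying $\phi(x)-\phi(y)\le c(x,y)$ for all $x,y\in S$.
   Context: $b\mathcal{B}(S)$ denotes the set of all bounded Borel measurable functions $S\to\mathbb{R}$; $\mathbf 1_R$ is the indicator function of $R$. *)

theory Defs
  imports "HOL-Probability.Probability"
begin

definition cost :: "('a \<times> 'a) set \<Rightarrow> 'a \<Rightarrow> 'a \<Rightarrow> real" where
  "cost R x y = 1 - indicator R (x, y)"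

definition feasible :: "('a::topological_space \<times> 'a) set \<Rightarrow> ('a \<Rightarrow> real) \<Rightarrow> bool" where
  "feasible R \<phi> \<longleftrightarrow> \<phi> \<in> borel_measurable borel \<and> bounded (range \<phi>) \<and>
     (\<forall>x y. \<phi> x - \<phi> y \<le> cost R x y)"

end

(*
  A feasible potential satisfies phi x <= phi y + 1 everywhere and phi x <= phi y on R, so
  subtracting its infimum yields a Borel function with values in [0, 1] that is monotone along R
  and has the same dual objective. These normalised potentials form a lattice closed under
  pointwise limits, on which the objective is modular and continuous under bounded convergence.
  For such a functional with supremum t, modularity gives F (min a b) >= F a + F b - t; so if
  F f_n > t - 2^-n, the tail infima h_n = inf_{k >= n} f_k satisfy F h_n >= t - 2^(1-n), and their
  increasing limit is a maximiser.
*)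

theory Submission
  imports Defs
begin

fun tail_min :: "(nat \<Rightarrow> 'a \<Rightarrow> real) \<Rightarrow> nat \<Rightarrow> nat \<Rightarrow> 'a \<Rightarrow> real" where
  "tail_min f n 0 = f n"
| "tail_min f n (Suc m) = (\<lambda>x. min (f n x) (tail_min f (Suc n) m x))"

lemma tail_min_Suc_le: "tail_min f n (Suc m) x \<le> tail_min f n m x"
proof (induction m arbitrary: n)
  case (Suc m)
  then show ?case by (simp add: min.coboundedI2)
qed simp

lemma tail_min_Suc_le_shift: "tail_min f n (Suc m) x \<le> tail_min f (Suc n) m x"
  by simp

locale modular_functional =
  fixes L :: "('a \<Rightarrow> real) set" and F :: "('a \<Rightarrow> real) \<Rightarrow> real" and B :: real
  assumes nonempty: "L \<noteq> {}"
    and min_closed: "\<And>a b. a \<in> L \<Longrightarrow> b \<in> L \<Longrightarrow> (\<lambda>x. min (a x) (b x)) \<in> L"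
    and max_closed: "\<And>a b. a \<in> L \<Longrightarrow> b \<in> L \<Longrightarrow> (\<lambda>x. max (a x) (b x)) \<in> L"
    and uniformly_bounded: "\<And>a x. a \<in> L \<Longrightarrow> \<bar>a x\<bar> \<le> B"
    and limit_closed: "\<And>u U. (\<And>n. u n \<in> L) \<Longrightarrow> (\<And>x. (\<lambda>n. u n x) \<longlonglongrightarrow> U x) \<Longrightarrow> U \<in> L"
    and modular: "\<And>a b. a \<in> L \<Longrightarrow> b \<in> L \<Longrightarrow>
      F (\<lambda>x. min (a x) (b x)) + F (\<lambda>x. max (a x) (b x)) = F a + F b"
    and continuous: "\<And>u U. (\<And>n. u n \<in> L) \<Longrightarrow> U \<in> L \<Longrightarrow> (\<And>x. (\<lambda>n. u n x) \<longlonglongrightarrow> U x) \<Longrightarrow>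
      (\<lambda>n. F (u n)) \<longlonglongrightarrow> F U"
    and bdd_above_F: "bdd_above (F ` L)"
begin

lemma F_le_Sup: "a \<in> L \<Longrightarrow> F a \<le> (SUP c\<in>L. F c)"
  using bdd_above_F by (rule cSUP_upper2) auto

lemma F_min_ge: "a \<in> L \<Longrightarrow> b \<in> L \<Longrightarrow> F a + F b - (SUP c\<in>L. F c) \<le> F (\<lambda>x. min (a x) (b x))"
  using modular[of a b] F_le_Sup[OF max_closed[of a b]] by linarith

lemma tail_min_in_L: "(\<And>n. f n \<in> L) \<Longrightarrow> tail_min f n m \<in> L"
  by (induction m arbitrary: n) (auto simp: min_closed)

lemma F_tail_min_ge:
  assumes f: "\<And>n. f n \<in> L" "\<And>n. (SUP c\<in>L. F c) - (1/2)^n < F (f n)"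
  shows "(SUP c\<in>L. F c) - 2 * (1/2)^n + (1/2)^(n+m) \<le> F (tail_min f n m)"
proof (induction m arbitrary: n)
  case 0
  then show ?case using f(2)[of n] by simp
next
  case (Suc m)
  have "F (f n) + F (tail_min f (Suc n) m) - (SUP c\<in>L. F c) \<le> F (tail_min f n (Suc m))"
    using F_min_ge[OF f(1) tail_min_in_L[OF f(1)]] by simp
  with Suc.IH[of "Suc n"] f(2)[of n] show ?case by simp
qed

lemma monotone_limit_in_L:
  assumes "\<And>n. u n \<in> L" and "\<And>x. monoseq (\<lambda>n. u n x)"
  obtains U where "U \<in> L" and "\<And>x. (\<lambda>n. u n x) \<longlonglongrightarrow> U x"
proof -
  have "convergent (\<lambda>n. u n x)" for x
    using assms uniformly_bounded by (intro Bseq_monoseq_convergent BseqI') auto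
  then have lim: "(\<lambda>n. u n x) \<longlonglongrightarrow> lim (\<lambda>n. u n x)" for x
    by (simp add: convergent_LIMSEQ_iff)
  show ?thesis by (rule that[OF limit_closed[OF assms(1) lim] lim])
qed

lemma tail_infima:
  assumes f: "\<And>n. f n \<in> L"
  obtains h where "\<And>n. h n \<in> L" and "\<And>n x. (\<lambda>m. tail_min f n m x) \<longlonglongrightarrow> h n x"
    and "\<And>n x. h n x \<le> h (Suc n) x"
proof -
  have "\<forall>n. \<exists>h. h \<in> L \<and> (\<forall>x. (\<lambda>m. tail_min f n m x) \<longlonglongrightarrow> h x)"
  proof
    fix n
    have "monoseq (\<lambda>m. tail_min f n m x)" for x
      by (intro decseq_imp_monoseq decseq_SucI tail_min_Suc_le)
    from monotone_limit_in_L[OF tail_min_in_L[OF f] this]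
    show "\<exists>h. h \<in> L \<and> (\<forall>x. (\<lambda>m. tail_min f n m x) \<longlonglongrightarrow> h x)" by blast
  qed
  then obtain h where "\<forall>n. h n \<in> L \<and> (\<forall>x. (\<lambda>m. tail_min f n m x) \<longlonglongrightarrow> h n x)"
    by (rule choice[THEN exE])
  then have h: "\<And>n. h n \<in> L" "\<And>n x. (\<lambda>m. tail_min f n m x) \<longlonglongrightarrow> h n x" by simp_all
  moreover have "h n x \<le> h (Suc n) x" for n x
  proof (rule LIMSEQ_le)
    show "(\<lambda>m. tail_min f n (Suc m) x) \<longlonglongrightarrow> h n x" using LIMSEQ_Suc[OF h(2)] .
    show "(\<lambda>m. tail_min f (Suc n) m x) \<longlonglongrightarrow> h (Suc n) x" by (rule h(2))
    show "\<exists>N. \<forall>m\<ge>N. tail_min f n (Suc m) x \<le> tail_min f (Suc n) m x"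
      by (intro exI[of _ 0] allI impI tail_min_Suc_le_shift)
  qed
  ultimately show ?thesis by (rule that)
qed

theorem maximizer_exists: "\<exists>\<phi>\<in>L. \<forall>a\<in>L. F a \<le> F \<phi>"
proof -
  define t where "t = (SUP c\<in>L. F c)"
  have "\<exists>a\<in>L. t - (1/2)^n < F a" for n :: nat
  proof -
    have "t - (1/2)^n < t" by simp
    then show ?thesis unfolding t_def using less_cSUP_iff[OF nonempty bdd_above_F] by blast
  qed
  then obtain f where f: "\<And>n. f n \<in> L" "\<And>n. t - (1/2)^n < F (f n)" by metis
  obtain h where h: "\<And>n. h n \<in> L" "\<And>n x. (\<lambda>m. tail_min f n m x) \<longlonglongrightarrow> h n x"
    and h_mono: "\<And>n x. h n x \<le> h (Suc n) x"
    using tail_infima[of f, OF f(1)] by blast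
  have F_h: "t - 2 * (1/2)^n \<le> F (h n)" for n
  proof (rule LIMSEQ_le_const)
    show "(\<lambda>m. F (tail_min f n m)) \<longlonglongrightarrow> F (h n)"
      by (rule continuous) (use tail_min_in_L[OF f(1)] h in auto)
    have "t - 2 * (1/2)^n \<le> F (tail_min f n m)" for m
    proof -
      have "0 \<le> (1/2 :: real)^(n+m)" by simp
      with F_tail_min_ge[OF f(1) f(2)[unfolded t_def], folded t_def, of n m] show ?thesis
        by linarith
    qed
    then show "\<exists>N. \<forall>m\<ge>N. t - 2 * (1/2)^n \<le> F (tail_min f n m)" by blast
  qed
  have "monoseq (\<lambda>n. h n x)" for x by (intro incseq_imp_monoseq incseq_SucI h_mono)
  then obtain H where H: "H \<in> L" "\<And>x. (\<lambda>n. h n x) \<longlonglongrightarrow> H x"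
    using monotone_limit_in_L[of h, OF h(1)] by blast
  have "(\<lambda>n. t - 2 * (1/2)^n) \<longlonglongrightarrow> t"
    by (intro tendsto_eq_intros LIMSEQ_power_zero) auto
  moreover have "(\<lambda>n. F (h n)) \<longlonglongrightarrow> F H"
    by (rule continuous) (use h(1) H in auto)
  ultimately have "t \<le> F H"
    by (rule LIMSEQ_le) (use F_h in blast)
  then show ?thesis
    using H(1) F_le_Sup unfolding t_def by (meson order_trans)
qed

end

definition normal_potentials :: "('a::topological_space \<times> 'a) set \<Rightarrow> ('a \<Rightarrow> real) set" where
  "normal_potentials R = {\<phi>. \<phi> \<in> borel_measurable borel \<and> (\<forall>x. \<phi> x \<in> {0..1}) \<and>
      (\<forall>x y. (x, y) \<in> R \<longrightarrow> \<phi> x \<le> \<phi> y)}"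

definition dual_objective :: "'a measure \<Rightarrow> 'a measure \<Rightarrow> ('a \<Rightarrow> real) \<Rightarrow> real" where
  "dual_objective \<mu> \<nu> \<phi> = (\<integral>x. \<phi> x \<partial>\<mu>) - (\<integral>x. \<phi> x \<partial>\<nu>)"

lemma le_cost_iff: "a - b \<le> cost R x y \<longleftrightarrow> a \<le> b + 1 \<and> ((x, y) \<in> R \<longrightarrow> a \<le> b)"
  by (auto simp: cost_def split: split_indicator)

lemma feasible_iff: "feasible R \<phi> \<longleftrightarrow> \<phi> \<in> borel_measurable borel \<and> bounded (range \<phi>) \<and>
    (\<forall>x y. \<phi> x \<le> \<phi> y + 1) \<and> (\<forall>x y. (x, y) \<in> R \<longrightarrow> \<phi> x \<le> \<phi> y)"
  by (auto simp: feasible_def le_cost_iff)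

lemma normal_potential_feasible:
  assumes "\<phi> \<in> normal_potentials R"
  shows "feasible R \<phi>"
proof -
  have unit: "\<phi> x \<in> {0..1}" for x using assms by (auto simp: normal_potentials_def)
  then have "bounded (range \<phi>)" by (intro bounded_subset[OF bounded_closed_interval[of 0 1]]) auto
  moreover have "\<phi> x \<le> \<phi> y + 1" for x y using unit[of x] unit[of y] by auto
  ultimately show ?thesis using assms by (auto simp: feasible_iff normal_potentials_def)
qed

lemma feasible_minus_Inf_normal:
  assumes "feasible R \<phi>"
  shows "(\<lambda>x. \<phi> x - (INF y. \<phi> y)) \<in> normal_potentials R"
proof -
  have \<phi>: "\<phi> \<in> borel_measurable borel" "bounded (range \<phi>)" "\<And>x y. \<phi> x \<le> \<phi> y + 1"
    "\<And>x y. (x, y) \<in> R \<Longrightarrow> \<phi> x \<le> \<phi> y"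
    using assms by (auto simp: feasible_iff)
  have "(INF y. \<phi> y) \<le> \<phi> x" for x
    by (rule cINF_lower[OF bounded_imp_bdd_below[OF \<phi>(2)]]) simp
  moreover have "\<phi> x - 1 \<le> (INF y. \<phi> y)" for x
    by (rule cINF_greatest) (use \<phi>(3)[of x] in \<open>auto simp: algebra_simps\<close>)
  ultimately show ?thesis
    using \<phi>(1,4) by (auto simp: normal_potentials_def algebra_simps)
qed

lemma normal_potentials_min:
  "a \<in> normal_potentials R \<Longrightarrow> b \<in> normal_potentials R \<Longrightarrow>
    (\<lambda>x. min (a x) (b x)) \<in> normal_potentials R"
  by (auto simp: normal_potentials_def min_def) (meson order_trans nle_le)+

lemma normal_potentials_max:
  "a \<in> normal_potentials R \<Longrightarrow> b \<in> normal_potentials R \<Longrightarrow>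
    (\<lambda>x. max (a x) (b x)) \<in> normal_potentials R"
  by (auto simp: normal_potentials_def max_def) (meson order_trans nle_le)+

lemma normal_potentials_limit:
  assumes u: "\<And>n. u n \<in> normal_potentials R" and lim: "\<And>x. (\<lambda>n. u n x) \<longlonglongrightarrow> U x"
  shows "U \<in> normal_potentials R"
proof -
  have "U \<in> borel_measurable borel"
    using u by (intro borel_measurable_LIMSEQ_real[OF lim]) (auto simp: normal_potentials_def)
  moreover have "U x \<in> {0..1}" for x
    using u by (auto simp: normal_potentials_def intro!: LIMSEQ_le_const[OF lim] LIMSEQ_le_const2[OF lim])
  moreover have "U x \<le> U y" if "(x, y) \<in> R" for x y
    using u that by (auto simp: normal_potentials_def intro!: LIMSEQ_le[OF lim lim])
  ultimately show ?thesis by (auto simp: normal_potentials_def)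
qed

lemma integrable_bounded_borel:
  assumes "finite_measure M" "sets M = sets borel" "\<phi> \<in> borel_measurable borel" "bounded (range \<phi>)"
  shows "integrable M (\<phi> :: _ \<Rightarrow> real)"
proof -
  obtain B where "\<And>x. \<bar>\<phi> x\<bar> \<le> B" using assms(4) by (auto simp: bounded_iff)
  moreover have "\<phi> \<in> borel_measurable M" using assms(2,3) measurable_cong_sets by blast
  ultimately show ?thesis by (intro finite_measure.integrable_const_bound[OF assms(1)]) auto
qed

lemma integrable_feasible:
  "prob_space M \<Longrightarrow> sets M = sets borel \<Longrightarrow> feasible R \<phi> \<Longrightarrow> integrable M \<phi>"
  by (auto simp: feasible_def intro: integrable_bounded_borel prob_space.finite_measure)

lemma integral_bounded_convergence:
  fixes u :: "nat \<Rightarrow> 'a::topological_space \<Rightarrow> real"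
  assumes "finite_measure M" "sets M = sets borel" "\<And>n. u n \<in> borel_measurable borel"
    and "\<And>n x. \<bar>u n x\<bar> \<le> B" and lim: "\<And>x. (\<lambda>n. u n x) \<longlonglongrightarrow> U x"
  shows "(\<lambda>n. \<integral>x. u n x \<partial>M) \<longlonglongrightarrow> (\<integral>x. U x \<partial>M)"
proof (rule integral_dominated_convergence[where w = "\<lambda>_. B"])
  show "integrable M (\<lambda>_. B)" using assms(1) by (simp add: finite_measure.integrable_const)
  show "\<And>n. u n \<in> borel_measurable M" using assms(2,3) measurable_cong_sets by blast
  then show "U \<in> borel_measurable M" by (rule borel_measurable_LIMSEQ_real[OF lim])
qed (use assms in auto)

lemma integral_min_plus_max:
  fixes a b :: "'a::topological_space \<Rightarrow> real"
  assumes "integrable M a" "integrable M b"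
  shows "(\<integral>x. min (a x) (b x) \<partial>M) + (\<integral>x. max (a x) (b x) \<partial>M) = (\<integral>x. a x \<partial>M) + (\<integral>x. b x \<partial>M)"
proof -
  have "(\<lambda>x. min (a x) (b x) + max (a x) (b x)) = (\<lambda>x. a x + b x)"
    by (auto simp: min_def max_def)
  then show ?thesis
    using assms by (simp flip: Bochner_Integration.integral_add add: integrable_min integrable_max)
qed

lemma dual_objective_shift:
  assumes "prob_space \<mu>" "prob_space \<nu>" "integrable \<mu> \<phi>" "integrable \<nu> \<phi>"
  shows "dual_objective \<mu> \<nu> (\<lambda>x. \<phi> x - c) = dual_objective \<mu> \<nu> \<phi>"
proof -
  have "(\<integral>x. \<phi> x - c \<partial>M) = (\<integral>x. \<phi> x \<partial>M) - c" if "prob_space M" "integrable M \<phi>" for M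
    using that by (simp add: Bochner_Integration.integral_diff finite_measure.integrable_const
        prob_space.finite_measure prob_space.prob_space)
  with assms show ?thesis by (simp add: dual_objective_def)
qed

lemma dual_objective_le_one:
  assumes "prob_space \<mu>" "sets \<mu> = sets borel" "prob_space \<nu>" "sets \<nu> = sets borel"
    and "feasible R \<phi>"
  shows "dual_objective \<mu> \<nu> \<phi> \<le> 1"
proof -
  have integrable: "integrable \<mu> \<phi>" "integrable \<nu> \<phi>"
    using assms by (auto intro: integrable_feasible)
  have osc: "\<phi> x \<le> \<phi> y + 1" for x y using assms(5) by (simp add: feasible_iff)
  have "(\<integral>x. \<phi> x \<partial>\<mu>) \<le> \<phi> y + 1" for y
    by (rule prob_space.integral_le_const[OF assms(1) integrable(1)]) (use osc in auto)
  then have "(\<integral>x. \<phi> x \<partial>\<mu>) - 1 \<le> (\<integral>x. \<phi> x \<partial>\<nu>)"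
    by (intro prob_space.integral_ge_const[OF assms(3) integrable(2)]) (auto simp: algebra_simps)
  then show ?thesis by (simp add: dual_objective_def)
qed

lemma modular_functional_dual_objective:
  assumes "prob_space \<mu>" "sets \<mu> = sets borel" "prob_space \<nu>" "sets \<nu> = sets borel"
  shows "modular_functional (normal_potentials R) (dual_objective \<mu> \<nu>) 1"
proof -
  have integrable_normal: "integrable \<mu> \<phi>" "integrable \<nu> \<phi>"
    if "\<phi> \<in> normal_potentials R" for \<phi>
    using assms normal_potential_feasible[OF that] by (auto intro: integrable_feasible)
  show ?thesis
  proof
    have "(\<lambda>_. 0) \<in> normal_potentials R" by (simp add: normal_potentials_def)
    then show "normal_potentials R \<noteq> {}" by blast
    show "\<bar>a x\<bar> \<le> 1" if "a \<in> normal_potentials R" for a x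
      using that by (auto simp: normal_potentials_def)
    show "dual_objective \<mu> \<nu> (\<lambda>x. min (a x) (b x)) + dual_objective \<mu> \<nu> (\<lambda>x. max (a x) (b x)) =
        dual_objective \<mu> \<nu> a + dual_objective \<mu> \<nu> b"
      if "a \<in> normal_potentials R" "b \<in> normal_potentials R" for a b
      using integral_min_plus_max[OF integrable_normal(1)[OF that(1)] integrable_normal(1)[OF that(2)]]
        integral_min_plus_max[OF integrable_normal(2)[OF that(1)] integrable_normal(2)[OF that(2)]]
      by (simp add: dual_objective_def)
    show "(\<lambda>n. dual_objective \<mu> \<nu> (u n)) \<longlonglongrightarrow> dual_objective \<mu> \<nu> U"
      if "\<And>n. u n \<in> normal_potentials R" "\<And>x. (\<lambda>n. u n x) \<longlonglongrightarrow> U x" for u U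
      unfolding dual_objective_def using that assms
      by (intro tendsto_diff integral_bounded_convergence[where B = 1])
        (auto simp: normal_potentials_def prob_space.finite_measure)
    show "bdd_above (dual_objective \<mu> \<nu> ` normal_potentials R)"
      using dual_objective_le_one[OF assms normal_potential_feasible] by (rule bdd_aboveI2)
  qed (fact normal_potentials_min normal_potentials_max normal_potentials_limit)+
qed

theorem mainTheorem6:
  fixes R :: "('a::polish_space \<times> 'a) set" and \<mu> \<nu> :: "'a measure"
  assumes "R \<in> sets (borel :: ('a \<times> 'a) measure)"
    and "prob_space \<mu>" and "sets \<mu> = sets borel"
    and "prob_space \<nu>" and "sets \<nu> = sets borel"
  shows "\<exists>\<phi>. feasible R \<phi> \<and>
    (\<integral>x. \<phi> x \<partial>\<mu>) - (\<integral>x. \<phi> x \<partial>\<nu>)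
      = (SUP \<psi>\<in>{\<psi>. feasible R \<psi>}. (\<integral>x. \<psi> x \<partial>\<mu>) - (\<integral>x. \<psi> x \<partial>\<nu>))"
proof -
  interpret modular_functional "normal_potentials R" "dual_objective \<mu> \<nu>" 1
    using modular_functional_dual_objective assms(2-5) .
  obtain \<phi> where \<phi>: "\<phi> \<in> normal_potentials R"
    and max: "\<And>\<psi>. \<psi> \<in> normal_potentials R \<Longrightarrow> dual_objective \<mu> \<nu> \<psi> \<le> dual_objective \<mu> \<nu> \<phi>"
    using maximizer_exists by blast
  have "dual_objective \<mu> \<nu> \<psi> \<le> dual_objective \<mu> \<nu> \<phi>" if "feasible R \<psi>" for \<psi>
  proof -
    have "integrable \<mu> \<psi>" "integrable \<nu> \<psi>"
      using assms that by (auto intro: integrable_feasible)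
    then have "dual_objective \<mu> \<nu> \<psi> = dual_objective \<mu> \<nu> (\<lambda>x. \<psi> x - (INF y. \<psi> y))"
      using assms(2,4) by (simp add: dual_objective_shift)
    then show ?thesis using max[OF feasible_minus_Inf_normal[OF that]] by simp
  qed
  then have "(SUP \<psi>\<in>{\<psi>. feasible R \<psi>}. dual_objective \<mu> \<nu> \<psi>) = dual_objective \<mu> \<nu> \<phi>"
    using normal_potential_feasible[OF \<phi>] by (intro cSup_eq_maximum) auto
  then show ?thesis
    using normal_potential_feasible[OF \<phi>] unfolding dual_objective_def by auto
qed

end
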